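(* Let $\mathcal E$ be a nest on a complex Banach space $X$ and let $\mathcal J$ be a $\mathcal T(\mathcal E)$-bimodule that is closed in the weak operator topology. Then $\mathcal J=\overline{\mathcal J_0}^{\mathrm{WOT}}$, where $\mathcal J_0$ is the set of finite rank operators in $\mathcal J$.
   Context: A nest $\mathcal E$ on $X$ is a family of closed linear subspaces of $X$, totally ordered by inclusion, containing $\{0\}$ and $X$, closed under arbitrary meets (intersections) and joins (norm-closed linear spans of unions). $\mathcal T(\mathcal E)=\{T\in\mathcal B(X): TE\subseteq E\ \forall E\in\mathcal E\}$. A $\mathcal T(\mathcal E)$-bimodule is a linear subspace $\mathcal J\subseteq\mathcal B(X)$ with $\mathcal T(\mathcal E)\mathcal J\subseteq\mathcal J$ and $\mathcal J\mathcal T(\mathcal E)\subseteq\mathcal J$. *)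

theory Defs
  imports "HOL-Analysis.Analysis"
begin

class complex_banach = banach +
  fixes scaleC :: "complex \<Rightarrow> 'a \<Rightarrow> 'a"
  assumes scaleC_add_right: "scaleC a (x + y) = scaleC a x + scaleC a y"
    and scaleC_add_left: "scaleC (a + b) x = scaleC a x + scaleC b x"
    and scaleC_scaleC: "scaleC a (scaleC b x) = scaleC (a * b) x"
    and scaleC_one: "scaleC 1 x = x"
    and scaleR_scaleC: "scaleR r x = scaleC (complex_of_real r) x"
    and norm_scaleC: "norm (scaleC a x) = cmod a * norm x"

definition csubspace :: "'a::complex_banach set \<Rightarrow> bool" where
  "csubspace M \<longleftrightarrow> 0 \<in> M \<and> (\<forall>x\<in>M. \<forall>y\<in>M. x + y \<in> M) \<and> (\<forall>c. \<forall>x\<in>M. scaleC c x \<in> M)"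

definition cspan :: "'a::complex_banach set \<Rightarrow> 'a set" where
  "cspan A = \<Inter>{M. csubspace M \<and> A \<subseteq> M}"

definition closed_csubspace :: "'a::complex_banach set \<Rightarrow> bool" where
  "closed_csubspace M \<longleftrightarrow> csubspace M \<and> closed M"

definition subspace_join :: "'a::complex_banach set set \<Rightarrow> 'a set" where
  "subspace_join S = closure (cspan (\<Union>S))"

definition nest :: "'a::complex_banach set set \<Rightarrow> bool" where
  "nest \<E> \<longleftrightarrow> (\<forall>E\<in>\<E>. closed_csubspace E)
     \<and> (\<forall>E\<in>\<E>. \<forall>F\<in>\<E>. E \<subseteq> F \<or> F \<subseteq> E)
     \<and> {0} \<in> \<E> \<and> UNIV \<in> \<E>
     \<and> (\<forall>S\<subseteq>\<E>. \<Inter>S \<in> \<E>)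
     \<and> (\<forall>S\<subseteq>\<E>. subspace_join S \<in> \<E>)"

definition bops :: "('a::complex_banach \<Rightarrow>\<^sub>L 'a) set" where
  "bops = {T. \<forall>c x. blinfun_apply T (scaleC c x) = scaleC c (blinfun_apply T x)}"

definition cdual :: "('a::complex_banach \<Rightarrow> complex) set" where
  "cdual = {f. bounded_linear f \<and> (\<forall>c x. f (scaleC c x) = c * f x)}"

text \<open>Weak operator topology: the coarsest topology making T \<mapsto> f(T x) continuous
  for all x in X and f in the dual of X.\<close>
definition wot :: "('a::complex_banach \<Rightarrow>\<^sub>L 'a) topology" where
  "wot = pullback_topology UNIV
     (\<lambda>T. \<lambda>(x, f). if f \<in> cdual then f (blinfun_apply T x) else 0)
     (product_topology (\<lambda>_. euclidean) UNIV)"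

definition wot_B :: "('a::complex_banach \<Rightarrow>\<^sub>L 'a) topology" where
  "wot_B = subtopology wot bops"

definition nest_alg :: "'a::complex_banach set set \<Rightarrow> ('a \<Rightarrow>\<^sub>L 'a) set" where
  "nest_alg \<E> = {T \<in> bops. \<forall>E\<in>\<E>. blinfun_apply T ` E \<subseteq> E}"

definition bimodule :: "('a::complex_banach \<Rightarrow>\<^sub>L 'a) set \<Rightarrow> ('a \<Rightarrow>\<^sub>L 'a) set \<Rightarrow> bool" where
  "bimodule \<A> J \<longleftrightarrow> J \<subseteq> bops \<and> 0 \<in> J
     \<and> (\<forall>S\<in>J. \<forall>T\<in>J. S + T \<in> J)
     \<and> (\<forall>c. \<forall>T\<in>J. \<exists>U\<in>J. \<forall>x. blinfun_apply U x = scaleC c (blinfun_apply T x))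
     \<and> (\<forall>A\<in>\<A>. \<forall>T\<in>J. A o\<^sub>L T \<in> J \<and> T o\<^sub>L A \<in> J)"

definition finite_rank :: "('a::complex_banach \<Rightarrow>\<^sub>L 'a) \<Rightarrow> bool" where
  "finite_rank T \<longleftrightarrow> (\<exists>F. finite F \<and> range (blinfun_apply T) \<subseteq> cspan F)"

end

theory Submission
  imports Defs
begin

text \<open>It suffices to show that every weak-operator continuous functional
  \<Sum>_i c_i f_i(T x_i) that annihilates the finite-rank operators of J also annihilates every T \<in> J;
  finite-dimensional linear algebra then interpolates T on any finitely many coordinates by a
  finite-rank member of J. If h vanishes on E(y)_- = \<Or>{E \<in> \<E>. y \<notin> E}, the rank-one operator
  z \<mapsto> h(z) y lies in the nest algebra, so T composed with it is a finite-rank member of J; by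
  Hahn--Banach this forces the finite-rank map K y = \<Sum>_i c_i f_i(T y) x_i to send y into E(y)_-.
  A closure argument improves this to: every nonzero y is sent into a member of the nest not
  containing y. Restricted to the span of the x_i, K therefore strictly lowers a chain of
  subspaces, so its trace \<Sum>_i c_i f_i(T x_i) vanishes.\<close>

section \<open>Hahn--Banach separation\<close>

definition linear_graph :: "('a::real_vector \<times> real) set \<Rightarrow> bool" where
  "linear_graph G \<longleftrightarrow> (\<forall>x a b. (x, a) \<in> G \<longrightarrow> (x, b) \<in> G \<longrightarrow> a = b)
    \<and> (\<forall>x a y b. (x, a) \<in> G \<longrightarrow> (y, b) \<in> G \<longrightarrow> (x + y, a + b) \<in> G)
    \<and> (\<forall>x a r. (x, a) \<in> G \<longrightarrow> (r *\<^sub>R x, r * a) \<in> G)"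

definition norm_dominated :: "real \<Rightarrow> ('a::real_normed_vector \<times> real) set \<Rightarrow> bool" where
  "norm_dominated C G \<longleftrightarrow> (\<forall>(x, a) \<in> G. a \<le> C * norm x)"

definition graph_extend :: "('a::real_vector \<times> real) set \<Rightarrow> 'a \<Rightarrow> real \<Rightarrow> ('a \<times> real) set" where
  "graph_extend G x0 c = {(y + t *\<^sub>R x0, a + t * c) | y a t. (y, a) \<in> G}"

lemma linear_graphD:
  assumes "linear_graph G"
  shows linear_graph_unique: "(x, a) \<in> G \<Longrightarrow> (x, b) \<in> G \<Longrightarrow> a = b"
    and linear_graph_add: "(x, a) \<in> G \<Longrightarrow> (y, b) \<in> G \<Longrightarrow> (x + y, a + b) \<in> G"
    and linear_graph_scale: "(x, a) \<in> G \<Longrightarrow> (r *\<^sub>R x, r * a) \<in> G"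
  using assms unfolding linear_graph_def by blast+

lemma linear_graph_zero: "linear_graph G \<Longrightarrow> G \<noteq> {} \<Longrightarrow> (0, 0) \<in> G"
  using linear_graph_scale[of G _ _ 0] by fastforce

lemma linear_graph_extend:
  assumes G: "linear_graph G" "G \<noteq> {}" and x0: "x0 \<notin> Domain G"
  shows "linear_graph (graph_extend G x0 c)" "G \<subset> graph_extend G x0 c"
proof -
  note unique = linear_graph_unique[OF G(1)] and add = linear_graph_add[OF G(1)]
    and sc = linear_graph_scale[OF G(1)]
  have z: "(0, 0) \<in> G" using linear_graph_zero[OF G] .
  have "G \<subseteq> graph_extend G x0 c" unfolding graph_extend_def by force
  moreover have "(x0, c) \<in> graph_extend G x0 c" "(x0, c) \<notin> G"
    unfolding graph_extend_def using z x0 by force+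
  ultimately show "G \<subset> graph_extend G x0 c" by blast
  have unique': "a = b"
    if P: "(x, a) \<in> graph_extend G x0 c" "(x, b) \<in> graph_extend G x0 c" for x a b
  proof -
    obtain y1 a1 t1 where 1: "x = y1 + t1 *\<^sub>R x0" "a = a1 + t1 * c" "(y1, a1) \<in> G"
      using P(1) unfolding graph_extend_def by auto
    obtain y2 a2 t2 where 2: "x = y2 + t2 *\<^sub>R x0" "b = a2 + t2 * c" "(y2, a2) \<in> G"
      using P(2) unfolding graph_extend_def by auto
    have t: "t1 = t2"
    proof (rule ccontr)
      assume ne: "t1 \<noteq> t2"
      have "(y2 + (-1) *\<^sub>R y1, a2 + (-1) * a1) \<in> G" using add[OF 2(3) sc[OF 1(3)]] .
      then have "((1 / (t1 - t2)) *\<^sub>R (y2 - y1), (1 / (t1 - t2)) * (a2 - a1)) \<in> G"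
        using sc by fastforce
      moreover have "y2 - y1 = (t1 - t2) *\<^sub>R x0" using 1(1) 2(1) by (simp add: algebra_simps)
      ultimately show False using x0 ne by force
    qed
    then show ?thesis using unique 1 2 by auto
  qed
  have add': "(x + y, a + b) \<in> graph_extend G x0 c"
    if P: "(x, a) \<in> graph_extend G x0 c" "(y, b) \<in> graph_extend G x0 c" for x a y b
  proof -
    obtain y1 a1 t1 where 1: "x = y1 + t1 *\<^sub>R x0" "a = a1 + t1 * c" "(y1, a1) \<in> G"
      using P(1) unfolding graph_extend_def by auto
    obtain y2 a2 t2 where 2: "y = y2 + t2 *\<^sub>R x0" "b = a2 + t2 * c" "(y2, a2) \<in> G"
      using P(2) unfolding graph_extend_def by auto
    have "x + y = (y1 + y2) + (t1 + t2) *\<^sub>R x0" "a + b = (a1 + a2) + (t1 + t2) * c"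
      using 1 2 by (simp_all add: algebra_simps)
    then show ?thesis unfolding graph_extend_def using add[OF 1(3) 2(3)] by blast
  qed
  have sc': "(r *\<^sub>R x, r * a) \<in> graph_extend G x0 c" if P: "(x, a) \<in> graph_extend G x0 c" for x a r
  proof -
    obtain y1 a1 t1 where 1: "x = y1 + t1 *\<^sub>R x0" "a = a1 + t1 * c" "(y1, a1) \<in> G"
      using P unfolding graph_extend_def by auto
    have "r *\<^sub>R x = r *\<^sub>R y1 + (r * t1) *\<^sub>R x0" "r * a = r * a1 + (r * t1) * c"
      using 1 by (simp_all add: algebra_simps)
    then show ?thesis unfolding graph_extend_def using sc[OF 1(3)] by blast
  qed
  show "linear_graph (graph_extend G x0 c)"
    unfolding linear_graph_def using unique' add' sc' by blast
qed

lemma norm_dominated_extend: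
  assumes G: "linear_graph G" "norm_dominated C G"
    and lower: "\<And>y a. (y, a) \<in> G \<Longrightarrow> a - C * norm (y - x0) \<le> c"
    and upper: "\<And>z b. (z, b) \<in> G \<Longrightarrow> c \<le> C * norm (z + x0) - b"
  shows "norm_dominated C (graph_extend G x0 c)"
  unfolding norm_dominated_def
proof safe
  fix x a assume "(x, a) \<in> graph_extend G x0 c"
  then obtain y a1 t where x: "x = y + t *\<^sub>R x0" "a = a1 + t * c" and ya1: "(y, a1) \<in> G"
    unfolding graph_extend_def by auto
  consider "t = 0" | "t > 0" | "t < 0" by linarith
  then show "a \<le> C * norm x"
  proof cases
    case 1 then show ?thesis using G(2) x ya1 by (auto simp: norm_dominated_def)
  next
    case 2
    have "c \<le> C * norm ((1 / t) *\<^sub>R y + x0) - (1 / t) * a1"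
      using upper[OF linear_graph_scale[OF G(1) ya1]] .
    then have "t * c \<le> t * (C * norm ((1 / t) *\<^sub>R y + x0) - (1 / t) * a1)"
      using 2 by simp
    also have "\<dots> = C * (t * norm ((1 / t) *\<^sub>R y + x0)) - a1"
      using 2 by (simp add: algebra_simps)
    also have "t * norm ((1 / t) *\<^sub>R y + x0) = norm (t *\<^sub>R ((1 / t) *\<^sub>R y + x0))"
      using 2 by simp
    also have "t *\<^sub>R ((1 / t) *\<^sub>R y + x0) = y + t *\<^sub>R x0"
      using 2 by (simp add: algebra_simps)
    finally show ?thesis using x by simp
  next
    case 3
    define s where "s = - t"
    have s: "s > 0" using 3 s_def by simp
    have "(1 / s) * a1 - C * norm ((1 / s) *\<^sub>R y - x0) \<le> c"
      using lower[OF linear_graph_scale[OF G(1) ya1]] .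
    then have "s * ((1 / s) * a1 - C * norm ((1 / s) *\<^sub>R y - x0)) \<le> s * c"
      using s by simp
    then have "a1 - C * (s * norm ((1 / s) *\<^sub>R y - x0)) \<le> s * c"
      using s by (simp add: algebra_simps)
    also have "s * norm ((1 / s) *\<^sub>R y - x0) = norm (s *\<^sub>R ((1 / s) *\<^sub>R y - x0))"
      using s by simp
    also have "s *\<^sub>R ((1 / s) *\<^sub>R y - x0) = y + t *\<^sub>R x0"
      using s by (simp add: s_def algebra_simps)
    finally show ?thesis using x s_def by simp
  qed
qed

lemma norm_dominated_extend_exists:
  assumes G: "linear_graph G" "norm_dominated C G" "G \<noteq> {}" and C: "C \<ge> 0"
  shows "\<exists>c. norm_dominated C (graph_extend G x0 c)"
proof -
  have z: "(0, 0) \<in> G" using linear_graph_zero G by blast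
  have sep: "a - C * norm (y - x0) \<le> C * norm (z + x0) - b" if "(y, a) \<in> G" "(z, b) \<in> G" for y a z b
  proof -
    have "a + b \<le> C * norm (y + z)"
      using G(2) linear_graph_add[OF G(1) that] by (auto simp: norm_dominated_def)
    also have "norm (y + z) \<le> norm (y - x0) + norm (z + x0)"
      using norm_triangle_ineq[of "y - x0" "z + x0"] by simp
    finally show ?thesis using C by (smt (verit) mult_left_mono distrib_left)
  qed
  define S where "S = {a - C * norm (y - x0) | y a. (y, a) \<in> G}"
  have bdd: "bdd_above S" unfolding S_def bdd_above_def using sep[OF _ z] by auto
  have ne: "S \<noteq> {}" using z unfolding S_def by auto
  have "norm_dominated C (graph_extend G x0 (Sup S))"
  proof (rule norm_dominated_extend[OF G(1,2)])
    show "a - C * norm (y - x0) \<le> Sup S" if "(y, a) \<in> G" for y a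
      by (rule cSup_upper[OF _ bdd]) (use that S_def in auto)
    show "Sup S \<le> C * norm (z + x0) - b" if "(z, b) \<in> G" for z b
      by (rule cSup_least[OF ne]) (use that sep S_def in auto)
  qed
  then show ?thesis ..
qed

lemma linear_graph_Union_chain:
  assumes "\<And>G. G \<in> \<C> \<Longrightarrow> linear_graph G" and chain: "subset.chain A \<C>"
  shows "linear_graph (\<Union>\<C>)"
  unfolding linear_graph_def
proof (intro conjI allI impI)
  fix x a b assume "(x, a) \<in> \<Union>\<C>" "(x, b) \<in> \<Union>\<C>"
  then obtain G H where "G \<in> \<C>" "H \<in> \<C>" "(x, a) \<in> G" "(x, b) \<in> H" by auto
  then show "a = b" using assms linear_graph_unique unfolding subset_chain_def by (metis subsetD)
next
  fix x a y b assume "(x, a) \<in> \<Union>\<C>" "(y, b) \<in> \<Union>\<C>"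
  then obtain G H where "G \<in> \<C>" "H \<in> \<C>" "(x, a) \<in> G" "(y, b) \<in> H" by auto
  then show "(x + y, a + b) \<in> \<Union>\<C>"
    using assms linear_graph_add unfolding subset_chain_def by (metis UnionI subsetD)
next
  fix x a r assume "(x, a) \<in> \<Union>\<C>"
  then show "(r *\<^sub>R x, r * a) \<in> \<Union>\<C>" using assms(1) linear_graph_scale by blast
qed

lemma dominated_linear_graph_total:
  assumes G0: "linear_graph G0" "norm_dominated C G0" "G0 \<noteq> {}" and C: "C \<ge> 0"
  shows "\<exists>G. G0 \<subseteq> G \<and> linear_graph G \<and> norm_dominated C G \<and> Domain G = UNIV"
proof -
  let ?A = "{G. G0 \<subseteq> G \<and> linear_graph G \<and> norm_dominated C G}"
  have "\<exists>M\<in>?A. \<forall>X\<in>?A. M \<subseteq> X \<longrightarrow> X = M"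
  proof (rule subset_Zorn_nonempty)
    fix \<C> assume \<C>: "\<C> \<noteq> {}" "subset.chain ?A \<C>"
    then have mem: "G0 \<subseteq> G" "linear_graph G" "norm_dominated C G" if "G \<in> \<C>" for G
      using that by (auto simp: subset_chain_def)
    have "linear_graph (\<Union>\<C>)" using linear_graph_Union_chain mem(2) \<C>(2) by blast
    moreover have "G0 \<subseteq> \<Union>\<C>" using mem(1) \<C>(1) by blast
    moreover have "norm_dominated C (\<Union>\<C>)"
      using mem(3) unfolding norm_dominated_def by fast
    ultimately show "\<Union>\<C> \<in> ?A" by blast
  qed (use G0 in auto)
  then obtain G where G: "G \<in> ?A" and max: "\<forall>X\<in>?A. G \<subseteq> X \<longrightarrow> X = G" ..
  have "Domain G = UNIV"
  proof (rule ccontr)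
    assume "Domain G \<noteq> UNIV"
    then obtain x0 where x0: "x0 \<notin> Domain G" by auto
    have "G \<noteq> {}" using G G0(3) by blast
    then obtain c where "norm_dominated C (graph_extend G x0 c)"
      using norm_dominated_extend_exists G C by blast
    moreover note linear_graph_extend[OF _ \<open>G \<noteq> {}\<close> x0, of c]
    ultimately have "graph_extend G x0 c \<in> ?A" "G \<subset> graph_extend G x0 c" using G by auto
    then show False using max by blast
  qed
  then show ?thesis using G by blast
qed

lemma linear_graph_bounded_linear:
  fixes G :: "('a::real_normed_vector \<times> real) set"
  assumes G: "linear_graph G" "norm_dominated C G" "Domain G = UNIV"
  shows "\<exists>u. bounded_linear u \<and> (\<forall>(x, a) \<in> G. u x = a)"
proof -
  define u where "u x = (THE a. (x, a) \<in> G)" for x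
  have ueq: "u x = a" if "(x, a) \<in> G" for x a
    unfolding u_def using that linear_graph_unique[OF G(1)] by blast
  have uG: "(x, u x) \<in> G" for x
    using G(3) ueq by (metis Domain_iff UNIV_I)
  have bd: "u x \<le> C * norm x" for x using G(2) uG[of x] by (auto simp: norm_dominated_def)
  have "bounded_linear u"
  proof (rule bounded_linear_intro[where K = C])
    show "u (x + y) = u x + u y" for x y using ueq[OF linear_graph_add[OF G(1) uG uG]] .
    show "u (r *\<^sub>R x) = r *\<^sub>R u x" for r x using ueq[OF linear_graph_scale[OF G(1) uG]] by simp
    show "norm (u x) \<le> norm x * C" for x
    proof -
      have "u (- x) = - u x" using ueq[OF linear_graph_scale[OF G(1) uG[of x], where r = "-1"]] by simp
      then show ?thesis using bd[of x] bd[of "- x"] by (simp add: abs_le_iff mult.commute)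
    qed
  qed
  then show ?thesis using ueq by blast
qed

lemma linear_graph_subspace_line:
  assumes M: "subspace M" and v: "v \<notin> M"
  shows "linear_graph {(m + t *\<^sub>R v, t) | m t. m \<in> M}" (is "linear_graph ?G")
  unfolding linear_graph_def
proof (intro conjI allI impI)
  have unique: "t1 = t2" if "m1 + t1 *\<^sub>R v = m2 + t2 *\<^sub>R v" "m1 \<in> M" "m2 \<in> M" for m1 m2 t1 t2
  proof (rule ccontr)
    assume ne: "t1 \<noteq> t2"
    have "m2 - m1 = (t1 - t2) *\<^sub>R v" using that(1) by (simp add: algebra_simps)
    then have "v = (1 / (t1 - t2)) *\<^sub>R (m2 - m1)" using ne by simp
    then show False using v M that(2,3) by (metis subspace_diff subspace_scale)
  qed
  fix x a b assume "(x, a) \<in> ?G" "(x, b) \<in> ?G"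
  then show "a = b" using unique by auto
next
  fix x a y b assume "(x, a) \<in> ?G" "(y, b) \<in> ?G"
  then obtain m1 m2 where "x = m1 + a *\<^sub>R v" "y = m2 + b *\<^sub>R v" "m1 \<in> M" "m2 \<in> M" by auto
  then have "x + y = (m1 + m2) + (a + b) *\<^sub>R v" "m1 + m2 \<in> M"
    using subspace_add[OF M] by (auto simp: algebra_simps)
  then show "(x + y, a + b) \<in> ?G" by blast
next
  fix x a r assume "(x, a) \<in> ?G"
  then obtain m where "x = m + a *\<^sub>R v" "m \<in> M" by auto
  then have "r *\<^sub>R x = r *\<^sub>R m + (r * a) *\<^sub>R v" "r *\<^sub>R m \<in> M"
    using subspace_scale[OF M] by (auto simp: algebra_simps)
  then show "(r *\<^sub>R x, r * a) \<in> ?G" by blast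
qed

lemma hahn_banach_separation:
  fixes M :: "'a::real_normed_vector set"
  assumes M: "subspace M" "closed M" and v: "v \<notin> M"
  shows "\<exists>u::'a \<Rightarrow> real. bounded_linear u \<and> (\<forall>m\<in>M. u m = 0) \<and> u v = 1"
proof -
  define d where "d = infdist v M"
  have d: "d > 0"
    unfolding d_def using infdist_pos_not_in_closed[OF M(2) _ v] subspace_0[OF M(1)] by auto
  define G0 where "G0 = {(m + t *\<^sub>R v, t) | m t. m \<in> M}"
  have bound: "a \<le> 1 / d * norm (m + a *\<^sub>R v)" if m: "m \<in> M" for m a
  proof (cases "a > 0")
    case False then show ?thesis using d by (smt (verit) norm_ge_zero divide_nonneg_nonneg mult_nonneg_nonneg)
  next
    case True
    have "d \<le> dist v ((- (1 / a)) *\<^sub>R m)"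
      unfolding d_def using subspace_scale[OF M(1) m] by (rule infdist_le)
    also have "\<dots> = norm ((1 / a) *\<^sub>R (m + a *\<^sub>R v))"
      using True by (simp add: dist_norm algebra_simps)
    also have "\<dots> = norm (m + a *\<^sub>R v) / a"
      using True by simp
    finally show ?thesis using d True by (simp add: field_simps)
  qed
  have "linear_graph G0" unfolding G0_def using linear_graph_subspace_line[OF M(1) v] .
  moreover have "norm_dominated (1 / d) G0" unfolding norm_dominated_def G0_def using bound by auto
  moreover have "G0 \<noteq> {}" using subspace_0[OF M(1)] unfolding G0_def by blast
  ultimately obtain G where G: "G0 \<subseteq> G" "linear_graph G" "norm_dominated (1 / d) G" "Domain G = UNIV"
    using dominated_linear_graph_total[of G0 "1 / d"] d by auto
  then obtain u where u: "bounded_linear u" "\<forall>(x, a) \<in> G. u x = a"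
    using linear_graph_bounded_linear by blast
  have uG0: "u x = a" if "(x, a) \<in> G0" for x a using u(2) G(1) that by auto
  show ?thesis
  proof (intro exI conjI ballI)
    show "u m = 0" if "m \<in> M" for m using uG0[of m 0] that unfolding G0_def by force
    show "u v = 1" using uG0[of v 1] subspace_0[OF M(1)] unfolding G0_def by force
  qed (fact u(1))
qed

section \<open>Complex scalars and the dual space\<close>

interpretation cvs: vector_space "scaleC :: complex \<Rightarrow> 'a::complex_banach \<Rightarrow> 'a"
  by unfold_locales (auto simp: scaleC_add_right scaleC_add_left scaleC_scaleC scaleC_one)

lemma csubspace_iff_cvs_subspace: "csubspace M \<longleftrightarrow> cvs.subspace M"
  unfolding csubspace_def cvs.subspace_def by blast

lemma cspan_eq_cvs_span: "cspan A = cvs.span A"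
proof
  show "cspan A \<subseteq> cvs.span A"
    unfolding cspan_def using csubspace_iff_cvs_subspace cvs.subspace_span cvs.span_superset by blast
  show "cvs.span A \<subseteq> cspan A"
    unfolding cspan_def using csubspace_iff_cvs_subspace cvs.span_minimal by blast
qed

lemma csubspace_imp_subspace: "csubspace M \<Longrightarrow> subspace M"
  unfolding csubspace_def subspace_def by (simp add: scaleR_scaleC)

lemma scaleC_Re_Im: "scaleC c x = Re c *\<^sub>R x + Im c *\<^sub>R scaleC \<i> (x::'a::complex_banach)"
proof -
  have "c = complex_of_real (Re c) + complex_of_real (Im c) * \<i>" by (simp add: complex_eq_iff)
  then have "scaleC c x = scaleC (complex_of_real (Re c)) x + scaleC (complex_of_real (Im c)) (scaleC \<i> x)"
    using scaleC_add_left scaleC_scaleC by metis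
  then show ?thesis by (simp only: scaleR_scaleC)
qed

lemma bounded_linear_scaleC: "bounded_linear (scaleC c :: 'a::complex_banach \<Rightarrow> 'a)"
proof (rule bounded_linear_intro[where K = "cmod c"])
  show "scaleC c (x + y) = scaleC c x + scaleC c (y::'a)" for x y by (rule scaleC_add_right)
  show "scaleC c (r *\<^sub>R x) = r *\<^sub>R scaleC c (x::'a)" for r x
    unfolding scaleR_scaleC scaleC_scaleC by (simp only: mult.commute)
  show "norm (scaleC c x) \<le> norm (x::'a) * cmod c" for x by (simp add: norm_scaleC mult.commute)
qed

lemma tendsto_scaleC_left:
  "(f \<longlongrightarrow> l) F \<Longrightarrow> ((\<lambda>n. scaleC (f n) (v::'a::complex_banach)) \<longlongrightarrow> scaleC l v) F"
proof -
  assume "(f \<longlongrightarrow> l) F"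
  then have "((\<lambda>n. Re (f n) *\<^sub>R v + Im (f n) *\<^sub>R scaleC \<i> v) \<longlongrightarrow> Re l *\<^sub>R v + Im l *\<^sub>R scaleC \<i> v) F"
    by (intro tendsto_intros)
  then show ?thesis by (simp only: scaleC_Re_Im[symmetric])
qed

lemma cdual_separation:
  fixes M :: "'a::complex_banach set"
  assumes M: "closed_csubspace M" and v: "v \<notin> M"
  shows "\<exists>h\<in>cdual. (\<forall>m\<in>M. h m = 0) \<and> h v \<noteq> 0"
proof -
  have MC: "\<And>c x. x \<in> M \<Longrightarrow> scaleC c x \<in> M"
    using M unfolding closed_csubspace_def csubspace_def by blast
  obtain u :: "'a \<Rightarrow> real" where u: "bounded_linear u" "\<forall>m\<in>M. u m = 0" "u v = 1"
    using hahn_banach_separation[OF _ _ v] M csubspace_imp_subspace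
    unfolding closed_csubspace_def by blast
  interpret u: bounded_linear u by fact
  \<comment> \<open>a complex functional is determined by its real part via h x = u x - i u (i x)\<close>
  define h where "h x = complex_of_real (u x) - \<i> * complex_of_real (u (scaleC \<i> x))" for x
  have "bounded_linear h"
    unfolding h_def
    using bounded_linear_compose[OF bounded_linear_of_real u(1)]
      bounded_linear_compose[OF bounded_linear_of_real
        bounded_linear_compose[OF u(1) bounded_linear_scaleC[of \<i>]]]
    by (intro bounded_linear_sub bounded_linear_const_mult) (simp_all add: o_def)
  moreover have "h (scaleC c x) = c * h x" for c x
  proof -
    have uC: "u (scaleC c x) = Re c * u x + Im c * u (scaleC \<i> x)" for c x
      by (subst scaleC_Re_Im) (simp add: u.add u.scale)
    have "u (scaleC \<i> (scaleC c x)) = - Im c * u x + Re c * u (scaleC \<i> x)"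
      using uC[of "\<i> * c" x] by (simp add: scaleC_scaleC)
    then show ?thesis unfolding h_def uC[of c x] by (simp add: complex_eq_iff ring_distribs)
  qed
  ultimately have "h \<in> cdual" unfolding cdual_def by blast
  moreover have "\<forall>m\<in>M. h m = 0" unfolding h_def using u(2) MC by simp
  moreover have "h v \<noteq> 0" unfolding h_def using u(3) by (simp add: complex_eq_iff)
  ultimately show ?thesis by blast
qed

lemma isCont_scaleC_left:
  "isCont f y \<Longrightarrow> isCont (\<lambda>z. scaleC (f z) (v::'a::complex_banach)) y"
  unfolding isCont_def by (rule tendsto_scaleC_left)

lemma cdual_bounded_linear: "h \<in> cdual \<Longrightarrow> bounded_linear h"
  unfolding cdual_def by blast

lemma cdual_scaleC: "h \<in> cdual \<Longrightarrow> h (scaleC c x) = c * h x"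
  unfolding cdual_def by blast

lemma cdual_sum:
  assumes "h \<in> cdual"
  shows "h (\<Sum>i\<in>I. scaleC (a i) (v i)) = (\<Sum>i\<in>I. a i * h (v i))"
proof -
  interpret bounded_linear h using cdual_bounded_linear[OF assms] .
  show ?thesis by (simp add: sum cdual_scaleC[OF assms])
qed

lemma bops_scaleC: "T \<in> bops \<Longrightarrow> blinfun_apply T (scaleC c x) = scaleC c (blinfun_apply T x)"
  unfolding bops_def by blast

section \<open>Finite interpolation\<close>

lemma interpolation_step:
  fixes S :: "('i \<Rightarrow> 'k::field) set" and p :: "'i \<Rightarrow> 'k"
  assumes Sadd: "\<forall>s\<in>S. \<forall>t\<in>S. (\<lambda>i. s i + t i) \<in> S" and Sscale: "\<forall>s\<in>S. \<forall>c. (\<lambda>i. c * s i) \<in> S"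
    and s0: "s0 \<in> S" "s0 j \<noteq> 0" and F: "finite F" "j \<notin> F"
    and annih: "\<forall>c. (\<forall>s\<in>S. (\<Sum>i\<in>insert j F. c i * s i) = 0) \<longrightarrow> (\<Sum>i\<in>insert j F. c i * p i) = 0"
    and c: "\<forall>s\<in>S. s j = 0 \<longrightarrow> (\<Sum>i\<in>F. c i * s i) = 0"
  shows "(\<Sum>i\<in>F. c i * (p i - p j / s0 j * s0 i)) = 0"
proof -
  define c' where "c' = c(j := - (\<Sum>i\<in>F. c i * s0 i) / s0 j)"
  have sum_c': "(\<Sum>i\<in>insert j F. c' i * q i) = c' j * q j + (\<Sum>i\<in>F. c i * q i)" for q
    unfolding c'_def using F by (auto intro: sum.cong)
  have "(\<Sum>i\<in>insert j F. c' i * s i) = 0" if s: "s \<in> S" for s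
  proof -
    define r where "r = s j / s0 j"
    have "(\<lambda>i. s i + (- r) * s0 i) \<in> S"
      using Sadd[rule_format, OF s Sscale[rule_format, OF s0(1)]] .
    moreover have "s j + (- r) * s0 j = 0" using s0(2) by (simp add: r_def)
    ultimately have "(\<Sum>i\<in>F. c i * (s i - r * s0 i)) = 0" using c by force
    then have "(\<Sum>i\<in>F. c i * s i) = r * (\<Sum>i\<in>F. c i * s0 i)"
      by (simp add: algebra_simps sum_subtractf sum_distrib_left)
    then show ?thesis unfolding sum_c' using s0(2) by (simp add: c'_def r_def field_simps)
  qed
  then have "(\<Sum>i\<in>insert j F. c' i * p i) = 0" using annih by blast
  then have "c' j * p j + (\<Sum>i\<in>F. c i * p i) = 0" unfolding sum_c' .
  moreover have "(\<Sum>i\<in>F. c i * (p i - p j / s0 j * s0 i))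
      = (\<Sum>i\<in>F. c i * p i) - p j / s0 j * (\<Sum>i\<in>F. c i * s0 i)"
    by (simp add: algebra_simps sum_subtractf sum_distrib_left)
  ultimately show ?thesis using s0(2) by (simp add: c'_def field_simps)
qed

lemma finite_interpolation:
  fixes S :: "('i \<Rightarrow> 'k::field) set" and p :: "'i \<Rightarrow> 'k"
  assumes "finite F" "(\<lambda>i. 0) \<in> S" "\<forall>s\<in>S. \<forall>t\<in>S. (\<lambda>i. s i + t i) \<in> S"
    "\<forall>s\<in>S. \<forall>c. (\<lambda>i. c * s i) \<in> S"
    and "\<forall>c. (\<forall>s\<in>S. (\<Sum>i\<in>F. c i * s i) = 0) \<longrightarrow> (\<Sum>i\<in>F. c i * p i) = 0"
  shows "\<exists>s\<in>S. \<forall>i\<in>F. s i = p i"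
  using assms
proof (induction F arbitrary: S p rule: finite_induct)
  case empty then show ?case by auto
next
  case (insert j F)
  note S0 = insert.prems(1) and Sadd = insert.prems(2) and Sscale = insert.prems(3)
    and annih = insert.prems(4)
  show ?case
  proof (cases "\<exists>s0\<in>S. s0 j \<noteq> 0")
    case True
    then obtain s0 where s0: "s0 \<in> S" "s0 j \<noteq> 0" by blast
    have "\<exists>s\<in>{s\<in>S. s j = 0}. \<forall>i\<in>F. s i = p i - p j / s0 j * s0 i"
    proof (rule insert.IH)
      show "\<forall>c. (\<forall>s\<in>{s\<in>S. s j = 0}. (\<Sum>i\<in>F. c i * s i) = 0)
          \<longrightarrow> (\<Sum>i\<in>F. c i * (p i - p j / s0 j * s0 i)) = 0"
        using interpolation_step[OF Sadd Sscale s0 insert.hyps annih] by blast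
      show "(\<lambda>i. 0) \<in> {s\<in>S. s j = 0}" using S0 by simp
      show "\<forall>s\<in>{s\<in>S. s j = 0}. \<forall>t\<in>{s\<in>S. s j = 0}. (\<lambda>i. s i + t i) \<in> {s\<in>S. s j = 0}"
        using Sadd by simp
      show "\<forall>s\<in>{s\<in>S. s j = 0}. \<forall>c. (\<lambda>i. c * s i) \<in> {s\<in>S. s j = 0}"
        using Sscale by simp
    qed
    then obtain s' where s': "s' \<in> S" "s' j = 0" "\<forall>i\<in>F. s' i = p i - p j / s0 j * s0 i"
      by blast
    have "(\<lambda>i. s' i + p j / s0 j * s0 i) \<in> S"
      using Sadd[rule_format, OF s'(1) Sscale[rule_format, OF s0(1)]] .
    moreover have "\<forall>i\<in>insert j F. s' i + p j / s0 j * s0 i = p i" using s' s0(2) by auto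
    ultimately show ?thesis by (intro bexI[of _ "\<lambda>i. s' i + p j / s0 j * s0 i"]) simp_all
  next
    case False
    then have vanish: "\<forall>s\<in>S. s j = 0" by blast
    have restrict: "(\<Sum>i\<in>insert j F. (c(j := 0)) i * q i) = (\<Sum>i\<in>F. c i * q i)"
      for c q :: "'i \<Rightarrow> 'k"
      using insert.hyps by (auto intro: sum.cong)
    define e :: "'i \<Rightarrow> 'k" where "e i = (if i = j then 1 else 0)" for i
    have e: "(\<Sum>i\<in>insert j F. e i * q i) = q j" for q
      using insert.hyps unfolding e_def by (simp add: sum.neutral)
    have "p j = 0" using annih[rule_format, of e] vanish unfolding e by simp
    moreover have "\<exists>s\<in>S. \<forall>i\<in>F. s i = p i"
    proof (rule insert.IH[OF S0 Sadd Sscale], intro allI impI)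
      fix c assume "\<forall>s\<in>S. (\<Sum>i\<in>F. c i * s i) = 0"
      then have "\<forall>s\<in>S. (\<Sum>i\<in>insert j F. (c(j := 0)) i * s i) = 0" unfolding restrict .
      then have "(\<Sum>i\<in>insert j F. (c(j := 0)) i * p i) = 0" using annih by blast
      then show "(\<Sum>i\<in>F. c i * p i) = 0" unfolding restrict .
    qed
    ultimately show ?thesis using vanish by auto
  qed
qed

section \<open>Traces of maps lowering a chain of subspaces\<close>

lemma finite_subset_chain_member:
  assumes chain: "\<forall>E\<in>\<N>. \<forall>F\<in>\<N>. E \<subseteq> F \<or> F \<subseteq> E" and "finite A"
    and cover: "A \<subseteq> \<Union>{E\<in>\<N>. Q E}" and "E0 \<in> \<N>" "Q E0"
  shows "\<exists>E\<in>\<N>. Q E \<and> A \<subseteq> E"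
  using \<open>finite A\<close> cover
proof (induction A rule: finite_induct)
  case empty then show ?case using \<open>E0 \<in> \<N>\<close> \<open>Q E0\<close> by auto
next
  case (insert a A)
  obtain E1 where E1: "E1 \<in> \<N>" "Q E1" "A \<subseteq> E1" using insert.IH insert.prems by auto
  obtain E2 where E2: "E2 \<in> \<N>" "Q E2" "a \<in> E2" using insert.prems by auto
  show ?case
  proof (cases "E1 \<subseteq> E2")
    case True then show ?thesis using E1 E2 by blast
  next
    case False then have "E2 \<subseteq> E1" using chain E1 E2 by blast
    then show ?thesis using E1 E2 by blast
  qed
qed

context module
begin

lemma subspace_Union_chain:
  assumes "\<forall>E\<in>\<N>. subspace E" "\<forall>E\<in>\<N>. \<forall>F\<in>\<N>. E \<subseteq> F \<or> F \<subseteq> E" "\<N> \<noteq> {}"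
  shows "subspace (\<Union>\<N>)"
  unfolding subspace_def
proof (intro conjI ballI allI)
  show "0 \<in> \<Union>\<N>" using assms(1,3) subspace_0 by blast
  show "x + y \<in> \<Union>\<N>" if xy: "x \<in> \<Union>\<N>" "y \<in> \<Union>\<N>" for x y
  proof -
    obtain E F where EF: "E \<in> \<N>" "x \<in> E" "F \<in> \<N>" "y \<in> F" using xy by blast
    then have "x + y \<in> E \<or> x + y \<in> F"
      using assms(1,2) subspace_add by (metis subsetD)
    then show ?thesis using EF by blast
  qed
  show "c *s x \<in> \<Union>\<N>" if "x \<in> \<Union>\<N>" for c x
    using that assms(1) subspace_scale by blast
qed

lemma span_subset_chain_member:
  assumes "\<forall>E\<in>\<N>. subspace E" "\<forall>E\<in>\<N>. \<forall>F\<in>\<N>. E \<subseteq> F \<or> F \<subseteq> E" "finite A"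
    and "A \<subseteq> \<Union>{E\<in>\<N>. Q E}" "E0 \<in> \<N>" "Q E0"
  shows "\<exists>E\<in>\<N>. Q E \<and> span A \<subseteq> E"
  using finite_subset_chain_member[OF assms(2-6)] assms(1) span_minimal by blast

end

context vector_space
begin

lemma proper_subspace_in_hyperplane:
  assumes B: "finite B" "independent B" and Z: "subspace Z" "Z \<subseteq> span B" "\<not> span B \<subseteq> Z"
  obtains b B' where "finite B'" "independent B'" "card B' < card B" "b \<in> span B" "b \<notin> span B'"
    "Z \<subseteq> span B'" "span B' \<subseteq> span B" "span B \<subseteq> span (insert b B')"
proof -
  obtain C where C: "C \<subseteq> Z" "independent C" "Z \<subseteq> span C"
    using maximal_independent_subset[of Z] by blast
  obtain D where D: "C \<subseteq> D" "D \<subseteq> span B" "independent D" "span B \<subseteq> span D"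
    using maximal_independent_subset_extend[of C "span B"] C(1,2) Z(2) by blast
  have D_fin: "finite D" "card D \<le> card B" using independent_span_bound[OF B(1) D(3,2)] by auto
  have "\<not> D \<subseteq> C"
  proof
    assume "D \<subseteq> C"
    then have "span B \<subseteq> Z" using D(4) span_mono[of D C] span_minimal[OF C(1) Z(1)] by blast
    then show False using Z(3) by blast
  qed
  then obtain b where b: "b \<in> D" "b \<notin> C" by blast
  show thesis
  proof
    show "finite (D - {b})" using D_fin(1) by simp
    show "independent (D - {b})" by (rule independent_mono[OF D(3)]) blast
    show "card (D - {b}) < card B" using card_Diff1_less[OF D_fin(1) b(1)] D_fin(2) by linarith
    show "b \<in> span B" using D(2) b(1) by blast
    show "span (D - {b}) \<subseteq> span B" using D(2) span_minimal[of "D - {b}"] subspace_span by blast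
    show "b \<notin> span (D - {b})" using D(3) b(1) unfolding dependent_def by blast
    show "Z \<subseteq> span (D - {b})" using C(3) D(1) b(2) span_mono[of C "D - {b}"] by blast
    show "span B \<subseteq> span (insert b (D - {b}))" using D(4) b(1) by (simp add: insert_absorb)
  qed
qed

lemma strictly_lowering_into_proper_subspace:
  assumes N: "\<forall>E\<in>\<N>. subspace E" "\<forall>E\<in>\<N>. \<forall>F\<in>\<N>. E \<subseteq> F \<or> F \<subseteq> E" "{0} \<in> \<N>"
    and B: "finite B" "\<not> span B \<subseteq> {0}"
    and K: "K ` span B \<subseteq> span B" "K 0 = 0"
    and lowering: "\<forall>y\<in>span B. y \<noteq> 0 \<longrightarrow> (\<exists>E\<in>\<N>. y \<notin> E \<and> K y \<in> E)"
  obtains Z where "subspace Z" "Z \<subseteq> span B" "\<not> span B \<subseteq> Z" "K ` span B \<subseteq> Z"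
proof
  define Z where "Z = \<Union>{span B \<inter> E | E. E \<in> \<N> \<and> \<not> span B \<subseteq> E}"
  show "subspace Z"
    unfolding Z_def using N B(2) by (intro subspace_Union_chain) (auto intro: subspace_inter)
  show "Z \<subseteq> span B" unfolding Z_def by blast
  show "\<not> span B \<subseteq> Z"
  proof
    assume "span B \<subseteq> Z"
    moreover have "Z \<subseteq> \<Union>{E\<in>\<N>. \<not> span B \<subseteq> E}" unfolding Z_def by blast
    ultimately have "B \<subseteq> \<Union>{E\<in>\<N>. \<not> span B \<subseteq> E}" using span_superset by blast
    from span_subset_chain_member[OF N(1,2) B(1) this N(3)] B(2) show False by blast
  qed
  show "K ` span B \<subseteq> Z"
  proof
    fix v assume "v \<in> K ` span B"
    then obtain y where y: "y \<in> span B" "v = K y" by blast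
    show "v \<in> Z"
    proof (cases "y = 0")
      case True then show ?thesis using \<open>subspace Z\<close> subspace_0 K(2) y(2) by simp
    next
      case False
      then obtain E where "E \<in> \<N>" "y \<notin> E" "K y \<in> E" using lowering y(1) by blast
      then show ?thesis unfolding Z_def using y K(1) by blast
    qed
  qed
qed

text \<open>The sum (\<Sum>i\<in>I. g i (x i)) is the trace of the finite-rank map y \<mapsto> \<Sum>i\<in>I. g i y *s x i.\<close>

lemma trace_strictly_lowering_zero:
  fixes g :: "'i \<Rightarrow> 'b \<Rightarrow> 'a" and x :: "'i \<Rightarrow> 'b"
  assumes "finite I" and N: "\<forall>E\<in>\<N>. subspace E" "\<forall>E\<in>\<N>. \<forall>F\<in>\<N>. E \<subseteq> F \<or> F \<subseteq> E" "{0} \<in> \<N>"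
    and g_add: "\<forall>i\<in>I. \<forall>u w. g i (u + w) = g i u + g i w"
    and g_scale: "\<forall>i\<in>I. \<forall>c w. g i (c *s w) = c * g i w"
    and "finite B" "independent B" "\<forall>i\<in>I. x i \<in> span B"
    and "\<forall>y\<in>span B. y \<noteq> 0 \<longrightarrow> (\<exists>E\<in>\<N>. y \<notin> E \<and> (\<Sum>i\<in>I. g i y *s x i) \<in> E)"
  shows "(\<Sum>i\<in>I. g i (x i)) = 0"
  using assms(7-10)
proof (induction "card B" arbitrary: B x rule: less_induct)
  case less
  note B = less.prems(1,2) and x_span = less.prems(3) and lowering = less.prems(4)
  have g0: "g i 0 = 0" if "i \<in> I" for i using g_add that by (metis add_cancel_right_right)
  define K where "K y = (\<Sum>i\<in>I. g i y *s x i)" for y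
  show ?case
  proof (cases "span B \<subseteq> {0}")
    case True
    then have "x i = 0" if "i \<in> I" for i using x_span that by blast
    then show ?thesis using g0 by simp
  next
    case nonzero: False
    have "K ` span B \<subseteq> span B" unfolding K_def using x_span by (auto intro: span_sum span_scale)
    moreover have "K 0 = 0" unfolding K_def using g0 by simp
    ultimately obtain Z where Z: "subspace Z" "Z \<subseteq> span B" "\<not> span B \<subseteq> Z" "K ` span B \<subseteq> Z"
      using strictly_lowering_into_proper_subspace[OF N B(1) nonzero] lowering unfolding K_def by blast
    obtain b B' where B': "finite B'" "independent B'" "card B' < card B" "b \<in> span B"
      "b \<notin> span B'" "Z \<subseteq> span B'" "span B' \<subseteq> span B" "span B \<subseteq> span (insert b B')"
      by (rule proper_subspace_in_hyperplane[OF B Z(1-3)])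
    \<comment> \<open>split each x i along the hyperplane span B' and the line through b\<close>
    have "\<forall>i\<in>I. \<exists>c. x i - c *s b \<in> span B'"
      using x_span B'(8) span_breakdown_eq by blast
    then obtain a where a: "\<forall>i\<in>I. x i - a i *s b \<in> span B'" by metis
    define w where "w i = x i - a i *s b" for i
    have x_split: "x i = w i + a i *s b" for i unfolding w_def by simp
    define \<alpha> where "\<alpha> y = (\<Sum>i\<in>I. g i y * a i)" for y
    have K_split: "K y = (\<Sum>i\<in>I. g i y *s w i) + \<alpha> y *s b" for y
      unfolding K_def \<alpha>_def x_split by (simp add: scale_right_distrib sum.distrib scale_sum_left)
    have \<alpha>_zero: "\<alpha> y = 0" if "y \<in> span B" for y
    proof (rule ccontr)
      assume "\<alpha> y \<noteq> 0"
      have "(\<Sum>i\<in>I. g i y *s w i) \<in> span B'" using a unfolding w_def by (intro span_sum span_scale) auto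
      moreover have "(\<Sum>i\<in>I. g i y *s w i) + \<alpha> y *s b \<in> span B'"
        using Z(4) B'(6) that unfolding K_split by blast
      ultimately have "\<alpha> y *s b \<in> span B'" using span_add_eq by blast
      then have "inverse (\<alpha> y) *s \<alpha> y *s b \<in> span B'" by (rule span_scale)
      then show False using \<open>\<alpha> y \<noteq> 0\<close> B'(5) by simp
    qed
    have "(\<Sum>i\<in>I. g i (w i)) = 0"
    proof (rule less.hyps[OF B'(3,1,2)])
      show "\<forall>i\<in>I. w i \<in> span B'" using a w_def by simp
      show "\<forall>y\<in>span B'. y \<noteq> 0 \<longrightarrow> (\<exists>E\<in>\<N>. y \<notin> E \<and> (\<Sum>i\<in>I. g i y *s w i) \<in> E)"
      proof (intro ballI impI)
        fix y assume y: "y \<in> span B'" "y \<noteq> 0"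
        then have "y \<in> span B" using B'(7) by blast
        then have "K y = (\<Sum>i\<in>I. g i y *s w i)" using K_split \<alpha>_zero by simp
        moreover have "\<exists>E\<in>\<N>. y \<notin> E \<and> K y \<in> E"
          using lowering \<open>y \<in> span B\<close> y(2) unfolding K_def by blast
        ultimately show "\<exists>E\<in>\<N>. y \<notin> E \<and> (\<Sum>i\<in>I. g i y *s w i) \<in> E" by simp
      qed
    qed
    moreover have "(\<Sum>i\<in>I. g i (x i)) = (\<Sum>i\<in>I. g i (w i)) + \<alpha> b"
      unfolding \<alpha>_def x_split using g_add g_scale by (simp add: sum.distrib mult.commute)
    ultimately show ?thesis using \<alpha>_zero[OF B'(4)] by simp
  qed
qed

end

section \<open>Nests, bimodules and rank-one operators\<close>

lemma bimoduleD:
  assumes "bimodule \<A> J"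
  shows bimodule_bops: "T \<in> J \<Longrightarrow> T \<in> bops"
    and bimodule_zero: "0 \<in> J"
    and bimodule_add: "S \<in> J \<Longrightarrow> T \<in> J \<Longrightarrow> S + T \<in> J"
    and bimodule_scaleC: "T \<in> J \<Longrightarrow> \<exists>U\<in>J. \<forall>x. blinfun_apply U x = scaleC c (blinfun_apply T x)"
    and bimodule_mult_right: "T \<in> J \<Longrightarrow> A \<in> \<A> \<Longrightarrow> T o\<^sub>L A \<in> J"
  using assms unfolding bimodule_def by (simp_all add: subset_iff)

definition rank_one :: "('a::complex_banach \<Rightarrow> complex) \<Rightarrow> 'a \<Rightarrow> ('a \<Rightarrow>\<^sub>L 'a)" where
  "rank_one h y = Blinfun (\<lambda>z. scaleC (h z) y)"

lemma rank_one_apply: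
  assumes "h \<in> cdual"
  shows "blinfun_apply (rank_one h y) z = scaleC (h z) y"
proof -
  interpret h: bounded_linear h using cdual_bounded_linear[OF assms] .
  obtain K where K: "\<And>x. norm (h x) \<le> norm x * K" using h.bounded by blast
  have "bounded_linear (\<lambda>z. scaleC (h z) y)"
  proof (rule bounded_linear_intro[where K = "K * norm y"])
    show "scaleC (h (x + z)) y = scaleC (h x) y + scaleC (h z) y" for x z
      by (simp add: h.add scaleC_add_left)
    show "scaleC (h (r *\<^sub>R x)) y = r *\<^sub>R scaleC (h x) y" for r x
    proof -
      have "h (r *\<^sub>R x) = complex_of_real r * h x" by (simp add: h.scale scaleR_conv_of_real)
      then show ?thesis unfolding scaleR_scaleC[of r "scaleC (h x) y"] by (simp only: scaleC_scaleC)
    qed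
    show "norm (scaleC (h x) y) \<le> norm x * (K * norm y)" for x
      using K[of x] by (simp add: norm_scaleC mult.assoc[symmetric] mult_right_mono)
  qed
  then show ?thesis unfolding rank_one_def by (simp add: bounded_linear_Blinfun_apply)
qed

lemma rank_one_bops: "h \<in> cdual \<Longrightarrow> rank_one h y \<in> bops"
  unfolding bops_def by (simp add: rank_one_apply cdual_scaleC scaleC_scaleC)

definition nest_lower :: "'a::complex_banach set set \<Rightarrow> 'a \<Rightarrow> 'a set" where
  "nest_lower \<E> y = subspace_join {E \<in> \<E>. y \<notin> E}"

lemma nestD:
  assumes "nest \<E>"
  shows nest_closed_csubspace: "E \<in> \<E> \<Longrightarrow> closed_csubspace E"
    and nest_chain: "E \<in> \<E> \<Longrightarrow> F \<in> \<E> \<Longrightarrow> E \<subseteq> F \<or> F \<subseteq> E"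
    and nest_zero: "{0} \<in> \<E>"
    and nest_join: "S \<subseteq> \<E> \<Longrightarrow> subspace_join S \<in> \<E>"
  using assms unfolding nest_def by simp_all

lemma nest_lower_in_nest: "nest \<E> \<Longrightarrow> nest_lower \<E> y \<in> \<E>"
  unfolding nest_lower_def by (rule nest_join) auto

lemma nest_lower_subset:
  assumes "nest \<E>" "E \<in> \<E>" "y \<in> E"
  shows "nest_lower \<E> y \<subseteq> E"
proof -
  have "\<Union>{E' \<in> \<E>. y \<notin> E'} \<subseteq> E" using assms nest_chain by blast
  then have "cspan (\<Union>{E' \<in> \<E>. y \<notin> E'}) \<subseteq> E"
    using nest_closed_csubspace[OF assms(1,2)] unfolding cspan_def closed_csubspace_def by blast
  moreover have "closed E" using nest_closed_csubspace[OF assms(1,2)] by (simp add: closed_csubspace_def)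
  ultimately show ?thesis unfolding nest_lower_def subspace_join_def by (rule closure_minimal)
qed

lemma rank_one_in_nest_alg:
  assumes "nest \<E>" "h \<in> cdual" and vanish: "\<forall>m\<in>nest_lower \<E> y. h m = 0"
  shows "rank_one h y \<in> nest_alg \<E>"
proof -
  have "scaleC (h z) y \<in> E" if E: "E \<in> \<E>" "z \<in> E" for E z
  proof (cases "y \<in> E")
    case True
    then show ?thesis using nest_closed_csubspace[OF assms(1) E(1)]
      unfolding closed_csubspace_def csubspace_def by blast
  next
    case False
    then have "E \<subseteq> \<Union>{E' \<in> \<E>. y \<notin> E'}" using E(1) by blast
    also have "\<dots> \<subseteq> cspan (\<Union>{E' \<in> \<E>. y \<notin> E'})"
      unfolding cspan_eq_cvs_span by (rule cvs.span_superset)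
    also have "\<dots> \<subseteq> nest_lower \<E> y"
      unfolding nest_lower_def subspace_join_def by (rule closure_subset)
    finally have "E \<subseteq> nest_lower \<E> y" .
    then have "h z = 0" using vanish E(2) by blast
    then show ?thesis using nest_closed_csubspace[OF assms(1) E(1)]
      unfolding closed_csubspace_def csubspace_def by simp
  qed
  then show ?thesis
    unfolding nest_alg_def using rank_one_bops[OF assms(2)] by (simp add: rank_one_apply[OF assms(2)] image_subset_iff)
qed

section \<open>Annihilators of the finite-rank part\<close>

lemma nest_strictly_lowering:
  fixes K :: "'a::complex_banach \<Rightarrow> 'a"
  assumes nest: "nest \<E>" and V: "finite V" "range K \<subseteq> cspan V" and cont: "isCont K y"
    and lower: "\<And>z. K z \<in> nest_lower \<E> z" and "y \<noteq> 0"
  shows "\<exists>E\<in>\<E>. y \<notin> E \<and> K y \<in> E"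
proof (cases "y \<in> nest_lower \<E> y")
  case False
  then show ?thesis using nest_lower_in_nest[OF nest] lower by blast
next
  case True
  define W where "W = \<Union>{E \<in> \<E>. y \<notin> E}"
  have subspaces: "\<forall>E\<in>{E \<in> \<E>. y \<notin> E}. cvs.subspace E"
    using nest_closed_csubspace[OF nest] csubspace_iff_cvs_subspace closed_csubspace_def by blast
  have W_subspace: "cvs.subspace W"
    unfolding W_def using subspaces nest_chain[OF nest] nest_zero[OF nest] \<open>y \<noteq> 0\<close>
    by (intro cvs.subspace_Union_chain) auto
  then have "y \<in> closure W"
    using True cvs.span_eq_iff unfolding nest_lower_def subspace_join_def W_def cspan_eq_cvs_span
    by metis
  then obtain s where s: "\<And>k. s k \<in> W" "s \<longlonglongrightarrow> y"
    unfolding closure_sequential by blast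
  \<comment> \<open>the finite-dimensional part of W met by the range of K lies in one member of the nest\<close>
  obtain C where C: "C \<subseteq> cspan V \<inter> W" "cvs.independent C" "cspan V \<inter> W \<subseteq> cvs.span C"
    using cvs.maximal_independent_subset[of "cspan V \<inter> W"] by blast
  have "finite C"
    using cvs.independent_span_bound[OF V(1) C(2)] C(1) unfolding cspan_eq_cvs_span by blast
  then obtain E0 where E0: "E0 \<in> \<E>" "y \<notin> E0" "cvs.span C \<subseteq> E0"
    using cvs.span_subset_chain_member[of \<E> C "\<lambda>E. y \<notin> E" "{0}"]
      nest_closed_csubspace[OF nest] csubspace_iff_cvs_subspace nest_chain[OF nest]
      nest_zero[OF nest] \<open>y \<noteq> 0\<close> C(1)
    unfolding closed_csubspace_def W_def by auto
  have "\<forall>k. K (s k) \<in> E0"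
  proof
    fix k
    obtain E where E: "E \<in> \<E>" "y \<notin> E" "s k \<in> E" using s(1)[of k] unfolding W_def by blast
    then have "K (s k) \<in> W" using lower[of "s k"] nest_lower_subset[OF nest] unfolding W_def by blast
    then show "K (s k) \<in> E0" using V(2) C(3) E0(3) by blast
  qed
  moreover have "closed E0" using nest_closed_csubspace[OF nest E0(1)] by (simp add: closed_csubspace_def)
  ultimately have "K y \<in> E0"
    using closed_sequentially isCont_tendsto_compose[OF cont s(2)] by (metis comp_def)
  then show ?thesis using E0 by blast
qed

lemma finite_rank_annihilator_lowering:
  fixes \<E> :: "'a::complex_banach set set" and F :: "('a \<times> ('a \<Rightarrow> complex)) set"
  assumes nest: "nest \<E>" and J: "bimodule (nest_alg \<E>) J" "T \<in> J"
    and F: "\<forall>i\<in>F. snd i \<in> cdual"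
    and annih: "\<forall>R\<in>J. finite_rank R \<longrightarrow> (\<Sum>i\<in>F. c i * snd i (blinfun_apply R (fst i))) = 0"
  shows "(\<Sum>i\<in>F. scaleC (c i * snd i (blinfun_apply T z)) (fst i)) \<in> nest_lower \<E> z"
    (is "?K \<in> _")
proof (rule ccontr)
  assume "?K \<notin> nest_lower \<E> z"
  then obtain h where h: "h \<in> cdual" "\<forall>m\<in>nest_lower \<E> z. h m = 0" "h ?K \<noteq> 0"
    using cdual_separation[OF nest_closed_csubspace[OF nest nest_lower_in_nest[OF nest]]] by blast
  define R where "R = T o\<^sub>L rank_one h z"
  have "R \<in> J"
    unfolding R_def using bimodule_mult_right[OF J rank_one_in_nest_alg[OF nest h(1,2)]] .
  have T: "T \<in> bops" using bimodule_bops[OF J] .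
  have R_apply: "blinfun_apply R w = scaleC (h w) (blinfun_apply T z)" for w
    unfolding R_def using rank_one_apply[OF h(1)] bops_scaleC[OF T] by simp
  have "finite_rank R"
    unfolding finite_rank_def cspan_eq_cvs_span
    using R_apply by (intro exI[of _ "{blinfun_apply T z}"]) (auto intro: cvs.span_scale cvs.span_base)
  then have "(\<Sum>i\<in>F. c i * snd i (blinfun_apply R (fst i))) = 0" using annih \<open>R \<in> J\<close> by blast
  moreover have "(\<Sum>i\<in>F. c i * snd i (blinfun_apply R (fst i))) = h ?K"
    unfolding R_apply cdual_sum[OF h(1)] using F by (intro sum.cong) (auto simp: cdual_scaleC)
  ultimately show False using h(3) by simp
qed

lemma finite_rank_annihilator_annihilates:
  fixes \<E> :: "'a::complex_banach set set" and F :: "('a \<times> ('a \<Rightarrow> complex)) set"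
  assumes nest: "nest \<E>" and J: "bimodule (nest_alg \<E>) J" "T \<in> J"
    and F: "finite F" "\<forall>i\<in>F. snd i \<in> cdual"
    and annih: "\<forall>R\<in>J. finite_rank R \<longrightarrow> (\<Sum>i\<in>F. c i * snd i (blinfun_apply R (fst i))) = 0"
  shows "(\<Sum>i\<in>F. c i * snd i (blinfun_apply T (fst i))) = 0"
proof -
  define g where "g i z = c i * snd i (blinfun_apply T z)" for i z
  define K where "K z = (\<Sum>i\<in>F. scaleC (g i z) (fst i))" for z
  have T: "T \<in> bops" using bimodule_bops[OF J] .
  have g_add: "\<forall>i\<in>F. \<forall>u w. g i (u + w) = g i u + g i w"
  proof (intro ballI allI)
    fix i u w assume "i \<in> F"
    then interpret bounded_linear "snd i" using F(2) cdual_bounded_linear by blast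
    show "g i (u + w) = g i u + g i w" by (simp add: g_def blinfun.add_right add distrib_left)
  qed
  have g_scale: "\<forall>i\<in>F. \<forall>a w. g i (scaleC a w) = a * g i w"
    unfolding g_def using F(2) by (simp add: bops_scaleC[OF T] cdual_scaleC)
  have "isCont (g i) y" if "i \<in> F" for i y
  proof -
    have "bounded_linear (\<lambda>z. snd i (blinfun_apply T z))"
      using bounded_linear_compose[OF cdual_bounded_linear blinfun.bounded_linear_right] F(2) that
      by blast
    then show ?thesis unfolding g_def by (intro continuous_intros linear_continuous_at)
  qed
  then have K_cont: "isCont K y" for y unfolding K_def by (simp add: isCont_scaleC_left)
  have K_range: "range K \<subseteq> cspan (fst ` F)"
    unfolding K_def cspan_eq_cvs_span by (auto intro: cvs.span_sum cvs.span_scale cvs.span_base)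
  have K_lower: "K z \<in> nest_lower \<E> z" for z
    unfolding K_def g_def using finite_rank_annihilator_lowering[OF nest J F(2) annih] .
  obtain B where B: "B \<subseteq> fst ` F" "cvs.independent B" "fst ` F \<subseteq> cvs.span B"
    using cvs.maximal_independent_subset[of "fst ` F"] by blast
  have "(\<Sum>i\<in>F. g i (fst i)) = 0"
  proof (rule cvs.trace_strictly_lowering_zero[OF F(1) _ _ _ g_add g_scale])
    show "\<forall>E\<in>\<E>. cvs.subspace E"
      using nest_closed_csubspace[OF nest] csubspace_iff_cvs_subspace closed_csubspace_def by blast
    show "\<forall>E\<in>\<E>. \<forall>F\<in>\<E>. E \<subseteq> F \<or> F \<subseteq> E" "{0} \<in> \<E>"
      using nest_chain[OF nest] nest_zero[OF nest] by blast+
    show "finite B" using B(1) F(1) finite_subset by blast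
    show "cvs.independent B" "\<forall>i\<in>F. fst i \<in> cvs.span B" using B by auto
    show "\<forall>y\<in>cvs.span B. y \<noteq> 0 \<longrightarrow> (\<exists>E\<in>\<E>. y \<notin> E \<and> (\<Sum>i\<in>F. scaleC (g i y) (fst i)) \<in> E)"
      using nest_strictly_lowering[OF nest finite_imageI[OF F(1)] K_range K_cont K_lower]
      unfolding K_def by blast
  qed
  then show ?thesis unfolding g_def .
qed

section \<open>The weak operator topology\<close>

definition wot_coord :: "('a::complex_banach \<Rightarrow>\<^sub>L 'a) \<Rightarrow> 'a \<times> ('a \<Rightarrow> complex) \<Rightarrow> complex" where
  "wot_coord T = (\<lambda>(x, f). if f \<in> cdual then f (blinfun_apply T x) else 0)"

lemma wot_eq_pullback_wot_coord:
  "wot = pullback_topology UNIV wot_coord (product_topology (\<lambda>_. euclidean) UNIV)"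
  unfolding wot_def wot_coord_def ..

lemma sum_wot_coord:
  assumes "finite F"
  shows "(\<Sum>i\<in>F. c i * wot_coord R i)
    = (\<Sum>i\<in>{i \<in> F. snd i \<in> cdual}. c i * snd i (blinfun_apply R (fst i)))"
proof -
  have "(\<Sum>i\<in>F. c i * wot_coord R i)
      = (\<Sum>i\<in>F. if snd i \<in> cdual then c i * snd i (blinfun_apply R (fst i)) else 0)"
    by (intro sum.cong) (auto simp: wot_coord_def case_prod_beta)
  also have "\<dots> = (\<Sum>i\<in>{i \<in> F. snd i \<in> cdual}. c i * snd i (blinfun_apply R (fst i)))"
    using assms by (simp add: sum.inter_filter)
  finally show ?thesis .
qed

lemma finite_rank_annihilator_annihilates_wot_coord:
  fixes \<E> :: "'a::complex_banach set set"
  assumes nest: "nest \<E>" and J: "bimodule (nest_alg \<E>) J" "T \<in> J" and F: "finite F"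
    and annih: "\<forall>R\<in>J. finite_rank R \<longrightarrow> (\<Sum>i\<in>F. c i * wot_coord R i) = 0"
  shows "(\<Sum>i\<in>F. c i * wot_coord T i) = 0"
proof -
  have "finite {i \<in> F. snd i \<in> cdual}" "\<forall>i\<in>{i \<in> F. snd i \<in> cdual}. snd i \<in> cdual"
    using F by simp_all
  moreover have "\<forall>R\<in>J. finite_rank R \<longrightarrow>
      (\<Sum>i\<in>{i \<in> F. snd i \<in> cdual}. c i * snd i (blinfun_apply R (fst i))) = 0"
    using annih unfolding sum_wot_coord[OF F] .
  ultimately show ?thesis
    unfolding sum_wot_coord[OF F] by (rule finite_rank_annihilator_annihilates[OF nest J])
qed

lemma finite_rank_zero: "finite_rank 0"
  unfolding finite_rank_def by (intro exI[of _ "{}"]) (auto simp: cspan_eq_cvs_span)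

lemma finite_rank_add:
  assumes "finite_rank R" "finite_rank S"
  shows "finite_rank (R + S)"
proof -
  obtain A B where AB: "finite A" "range (blinfun_apply R) \<subseteq> cvs.span A"
    "finite B" "range (blinfun_apply S) \<subseteq> cvs.span B"
    using assms unfolding finite_rank_def cspan_eq_cvs_span by blast
  then have "R x \<in> cvs.span (A \<union> B)" "S x \<in> cvs.span (A \<union> B)" for x
    using cvs.span_mono[of A "A \<union> B"] cvs.span_mono[of B "A \<union> B"] by auto
  then have "range (blinfun_apply (R + S)) \<subseteq> cvs.span (A \<union> B)"
    by (auto simp: plus_blinfun.rep_eq intro: cvs.span_add)
  then show ?thesis unfolding finite_rank_def cspan_eq_cvs_span using AB by blast
qed

lemma finite_rank_scaleC:
  assumes "finite_rank R" "\<forall>x. blinfun_apply U x = scaleC c (blinfun_apply R x)"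
  shows "finite_rank U"
proof -
  obtain A where "finite A" "range (blinfun_apply R) \<subseteq> cvs.span A"
    using assms(1) unfolding finite_rank_def cspan_eq_cvs_span by blast
  moreover have "blinfun_apply U x \<in> cvs.span A" for x
    using assms(2) cvs.span_scale[of "blinfun_apply R x" A c] calculation(2) by auto
  ultimately show ?thesis unfolding finite_rank_def cspan_eq_cvs_span by blast
qed

lemma finite_rank_interpolation:
  fixes \<E> :: "'a::complex_banach set set" and J :: "('a \<Rightarrow>\<^sub>L 'a) set"
  assumes nest: "nest \<E>" and J: "bimodule (nest_alg \<E>) J" "T \<in> J" and F: "finite F"
  shows "\<exists>R\<in>{R \<in> J. finite_rank R}. \<forall>i\<in>F. wot_coord R i = wot_coord T i"
proof -
  define S where "S = wot_coord ` {R \<in> J. finite_rank R}"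
  have "\<exists>s\<in>S. \<forall>i\<in>F. s i = wot_coord T i"
  proof (rule finite_interpolation[OF F])
    have "(\<lambda>i. 0) = wot_coord 0" by (auto simp: wot_coord_def cdual_def linear_simps)
    then show "(\<lambda>i. 0) \<in> S"
      unfolding S_def using bimodule_zero[OF J(1)] finite_rank_zero by blast
    show "\<forall>s\<in>S. \<forall>t\<in>S. (\<lambda>i. s i + t i) \<in> S"
    proof (clarsimp simp: S_def)
      fix R1 R2 assume "R1 \<in> J" "finite_rank R1" "R2 \<in> J" "finite_rank R2"
      moreover have "(\<lambda>i. wot_coord R1 i + wot_coord R2 i) = wot_coord (R1 + R2)"
        by (auto simp: wot_coord_def plus_blinfun.rep_eq cdual_def linear_simps)
      ultimately show "(\<lambda>i. wot_coord R1 i + wot_coord R2 i) \<in> wot_coord ` {R \<in> J. finite_rank R}"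
        using bimodule_add[OF J(1)] finite_rank_add by blast
    qed
    show "\<forall>s\<in>S. \<forall>c. (\<lambda>i. c * s i) \<in> S"
    proof (clarsimp simp: S_def)
      fix R c assume R: "R \<in> J" "finite_rank R"
      obtain U where U: "U \<in> J" "\<forall>x. blinfun_apply U x = scaleC c (blinfun_apply R x)"
        using bimodule_scaleC[OF J(1) R(1)] by blast
      have "(\<lambda>i. c * wot_coord R i) = wot_coord U"
        using U(2) by (auto simp: wot_coord_def cdual_scaleC)
      then show "(\<lambda>i. c * wot_coord R i) \<in> wot_coord ` {R \<in> J. finite_rank R}"
        using U finite_rank_scaleC[OF R(2) U(2)] by blast
    qed
    show "\<forall>c. (\<forall>s\<in>S. (\<Sum>i\<in>F. c i * s i) = 0) \<longrightarrow> (\<Sum>i\<in>F. c i * wot_coord T i) = 0"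
      unfolding S_def using finite_rank_annihilator_annihilates_wot_coord[OF nest J F] by blast
  qed
  then show ?thesis unfolding S_def by auto
qed

lemma in_wot_B_closure_ofI:
  assumes "T \<in> bops" "S \<subseteq> bops"
    and interpolate: "\<And>F. finite F \<Longrightarrow> \<exists>R\<in>S. \<forall>i\<in>F. wot_coord R i = wot_coord T i"
  shows "T \<in> wot_B closure_of S"
  unfolding in_closure_of
proof (intro conjI allI impI)
  show "T \<in> topspace wot_B"
    using assms(1) unfolding wot_B_def wot_eq_pullback_wot_coord by (simp add: topspace_pullback_topology)
  fix U assume U: "T \<in> U \<and> openin wot_B U"
  then obtain U' where U': "openin wot U'" "U = U' \<inter> bops"
    unfolding wot_B_def openin_subtopology by blast
  then obtain V where V: "openin (product_topology (\<lambda>_. euclidean) UNIV) V" "U' = wot_coord -` V \<inter> UNIV"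
    unfolding wot_eq_pullback_wot_coord openin_pullback_topology by blast
  have "wot_coord T \<in> V" using U U' V by blast
  then obtain W where W: "finite {i. W i \<noteq> UNIV}" "wot_coord T \<in> Pi\<^sub>E UNIV W" "Pi\<^sub>E UNIV W \<subseteq> V"
    using V(1) unfolding openin_product_topology_alt by auto
  obtain R where R: "R \<in> S" "\<forall>i\<in>{i. W i \<noteq> UNIV}. wot_coord R i = wot_coord T i"
    using interpolate[OF W(1)] by blast
  have "wot_coord R i \<in> W i" for i
  proof (cases "W i = UNIV")
    case False
    then have "wot_coord R i = wot_coord T i" using R(2) by blast
    then show ?thesis using PiE_mem[OF W(2) UNIV_I] by simp
  qed simp
  then have "wot_coord R \<in> Pi\<^sub>E UNIV W" by (simp add: PiE_iff)
  then have "R \<in> U'" using W(3) V(2) by blast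
  then have "R \<in> U" using U'(2) R(1) assms(2) by blast
  then show "\<exists>R. R \<in> S \<and> R \<in> U" using R(1) by blast
qed

theorem mainTheorem10:
  fixes \<E> :: "'a::complex_banach set set" and J :: "('a \<Rightarrow>\<^sub>L 'a) set"
  assumes "nest \<E>"
    and "bimodule (nest_alg \<E>) J"
    and "closedin wot_B J"
  shows "J = wot_B closure_of {T \<in> J. finite_rank T}"
proof
  show "wot_B closure_of {T \<in> J. finite_rank T} \<subseteq> J"
    by (rule closure_of_minimal[OF _ assms(3)]) blast
  show "J \<subseteq> wot_B closure_of {T \<in> J. finite_rank T}"
  proof
    fix T assume "T \<in> J"
    show "T \<in> wot_B closure_of {T \<in> J. finite_rank T}"
    proof (rule in_wot_B_closure_ofI)
      show "T \<in> bops" "{T \<in> J. finite_rank T} \<subseteq> bops"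
        using bimodule_bops[OF assms(2)] \<open>T \<in> J\<close> by auto
    qed (rule finite_rank_interpolation[OF assms(1,2) \<open>T \<in> J\<close>])
  qed
qed

end
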